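(* For every $\varepsilon>0$ there is a constant $C_\varepsilon$ such that for every $n\geq 2$ and every pair of disjoint sets $\mathcal{A},\mathcal{B}\subseteq\{0,1\}^n$, there is a first-order sentence over $\tau_{\mathsf{string}}$ with at most $(1+\varepsilon)\frac{n}{\log_2 n}+C_\varepsilon$ quantifiers that is true in $\mathbf{B}_w$ for all $w\in\mathcal{A}$ and false in $\mathbf{B}_{w'}$ for all $w'\in\mathcal{B}$.
   Context: Vocabulary $\tau_{\mathsf{string}}=\langle <, S;\ \mathsf{min},\mathsf{max}\rangle$ with $<$ binary, $S$ unary, $\mathsf{min},\mathsf{max}$ constants. A string $w=w_1\cdots w_n\in\{0,1\}^n$ ($n\geq 1$) is encoded by the structure $\mathbf{B}_w$ with universe $\{1,\dots,n\}$, $<$ the usual order, $S=\{i: w_i=1\}$, $\mathsf{min}=1$, $\mathsf{max}=n$. The number of quantifiers is the number of quantifier occurrences. *)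

theory Defs
  imports Complex_Main
begin

text \<open>First-order logic over the vocabulary tau_string = (<, S; min, max).
  Variables are natural numbers.\<close>

datatype fterm = Var nat | MinC | MaxC

datatype fo =
    Less fterm fterm
  | Pred fterm
  | Eq fterm fterm
  | FTrue
  | Neg fo
  | Conj fo fo
  | Disj fo fo
  | Ex nat fo
  | All nat fo

fun tvars :: "fterm \<Rightarrow> nat set" where
  "tvars (Var x) = {x}"
| "tvars MinC = {}"
| "tvars MaxC = {}"

fun free_vars :: "fo \<Rightarrow> nat set" where
  "free_vars (Less s t) = tvars s \<union> tvars t"
| "free_vars (Pred t) = tvars t"
| "free_vars (Eq s t) = tvars s \<union> tvars t"
| "free_vars FTrue = {}"
| "free_vars (Neg f) = free_vars f"
| "free_vars (Conj f g) = free_vars f \<union> free_vars g"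
| "free_vars (Disj f g) = free_vars f \<union> free_vars g"
| "free_vars (Ex x f) = free_vars f - {x}"
| "free_vars (All x f) = free_vars f - {x}"

definition sentence :: "fo \<Rightarrow> bool" where
  "sentence f \<longleftrightarrow> free_vars f = {}"

fun nquant :: "fo \<Rightarrow> nat" where
  "nquant (Less s t) = 0"
| "nquant (Pred t) = 0"
| "nquant (Eq s t) = 0"
| "nquant FTrue = 0"
| "nquant (Neg f) = nquant f"
| "nquant (Conj f g) = nquant f + nquant g"
| "nquant (Disj f g) = nquant f + nquant g"
| "nquant (Ex x f) = Suc (nquant f)"
| "nquant (All x f) = Suc (nquant f)"

text \<open>The structure B_w for a string w = w_1 ... w_n (a bool list, True = 1):
  universe {1..n}, usual order, S = {i. w_i = 1}, min = 1, max = n.\<close>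

fun teval :: "bool list \<Rightarrow> (nat \<Rightarrow> nat) \<Rightarrow> fterm \<Rightarrow> nat" where
  "teval w \<sigma> (Var x) = \<sigma> x"
| "teval w \<sigma> MinC = 1"
| "teval w \<sigma> MaxC = length w"

fun sat :: "bool list \<Rightarrow> (nat \<Rightarrow> nat) \<Rightarrow> fo \<Rightarrow> bool" where
  "sat w \<sigma> (Less s t) \<longleftrightarrow> teval w \<sigma> s < teval w \<sigma> t"
| "sat w \<sigma> (Pred t) \<longleftrightarrow> w ! (teval w \<sigma> t - 1)"
| "sat w \<sigma> (Eq s t) \<longleftrightarrow> teval w \<sigma> s = teval w \<sigma> t"
| "sat w \<sigma> FTrue \<longleftrightarrow> True"
| "sat w \<sigma> (Neg f) \<longleftrightarrow> \<not> sat w \<sigma> f"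
| "sat w \<sigma> (Conj f g) \<longleftrightarrow> sat w \<sigma> f \<and> sat w \<sigma> g"
| "sat w \<sigma> (Disj f g) \<longleftrightarrow> sat w \<sigma> f \<or> sat w \<sigma> g"
| "sat w \<sigma> (Ex x f) \<longleftrightarrow> (\<exists>i\<in>{1..length w}. sat w (\<sigma>(x := i)) f)"
| "sat w \<sigma> (All x f) \<longleftrightarrow> (\<forall>i\<in>{1..length w}. sat w (\<sigma>(x := i)) f)"

text \<open>Truth of a sentence in B_w (assignment irrelevant for sentences; we fix 1).\<close>
definition holds :: "bool list \<Rightarrow> fo \<Rightarrow> bool" where
  "holds w f \<longleftrightarrow> sat w (\<lambda>_. 1) f"

end

theory Submission
  imports Defs "HOL-Combinatorics.Permutations" "HOL-Real_Asymp.Real_Asymp"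
begin

text \<open>
  Choose k with 2^n \<le> k! and map the strings of length n injectively to permutations of k
  points. A string w is then named by k positions whose relative order realises its
  permutation, and these k existentially quantified positions determine w among all strings
  of length n. The separating sentence guesses them, checks that their order type belongs to
  some w0 in A, and verifies w = w0 bit by bit. The verification costs only O(log n)
  quantifiers: a bisection formula spends three quantifiers per level to visit every pair of
  adjacent positions of an interval of length 2^T, and the quantifier-free choices made on the
  way spell out the offset of the pair, so the expected bits of w0 can be hard-wired. Two such
  intervals of length 2^T \<ge> (n - 1)/2 cover the string. By Stirling, k \<approx> n / log n.
\<close>

definition imp :: "fo \<Rightarrow> fo \<Rightarrow> fo" where
  "imp p q = Disj (Neg p) q"

definition conj_list :: "fo list \<Rightarrow> fo" where
  "conj_list fs = foldr Conj fs FTrue"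

definition disj_list :: "fo list \<Rightarrow> fo" where
  "disj_list fs = foldr Disj fs (Neg FTrue)"

definition ex_list :: "nat list \<Rightarrow> fo \<Rightarrow> fo" where
  "ex_list xs f = foldr Ex xs f"

definition literal :: "bool \<Rightarrow> fo \<Rightarrow> fo" where
  "literal b f = (if b then f else Neg f)"

lemma sat_imp [simp]: "sat w \<sigma> (imp p q) \<longleftrightarrow> (sat w \<sigma> p \<longrightarrow> sat w \<sigma> q)"
  by (simp add: imp_def)

lemma sat_conj_list [simp]: "sat w \<sigma> (conj_list fs) \<longleftrightarrow> (\<forall>f\<in>set fs. sat w \<sigma> f)"
  by (induction fs) (auto simp: conj_list_def)

lemma sat_disj_list [simp]: "sat w \<sigma> (disj_list fs) \<longleftrightarrow> (\<exists>f\<in>set fs. sat w \<sigma> f)"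
  by (induction fs) (auto simp: disj_list_def)

lemma sat_literal [simp]: "sat w \<sigma> (literal b f) \<longleftrightarrow> (sat w \<sigma> f \<longleftrightarrow> b)"
  by (simp add: literal_def)

lemma sat_ex_list:
  "sat w \<sigma> (ex_list xs f) \<longleftrightarrow>
     (\<exists>\<tau>. (\<forall>x. x \<notin> set xs \<longrightarrow> \<tau> x = \<sigma> x) \<and> (\<forall>x\<in>set xs. \<tau> x \<in> {1..length w}) \<and> sat w \<tau> f)"
proof (induction xs arbitrary: \<sigma>)
  case Nil
  have "(\<forall>x. \<tau> x = \<sigma> x) \<longleftrightarrow> \<tau> = \<sigma>" for \<tau> :: "nat \<Rightarrow> nat"
    by auto
  then show ?case
    by (simp add: ex_list_def)
next
  case (Cons x xs)
  show ?case
  proof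
    assume "sat w \<sigma> (ex_list (x # xs) f)"
    then obtain i \<tau> where "i \<in> {1..length w}" "\<forall>y. y \<notin> set xs \<longrightarrow> \<tau> y = (\<sigma>(x := i)) y"
      "\<forall>y\<in>set xs. \<tau> y \<in> {1..length w}" "sat w \<tau> f"
      using Cons.IH by (auto simp: ex_list_def)
    then show "\<exists>\<tau>. (\<forall>y. y \<notin> set (x # xs) \<longrightarrow> \<tau> y = \<sigma> y) \<and>
        (\<forall>y\<in>set (x # xs). \<tau> y \<in> {1..length w}) \<and> sat w \<tau> f"
      by (intro exI[of _ \<tau>]) (auto split: if_splits)
  next
    assume "\<exists>\<tau>. (\<forall>y. y \<notin> set (x # xs) \<longrightarrow> \<tau> y = \<sigma> y) \<and>
        (\<forall>y\<in>set (x # xs). \<tau> y \<in> {1..length w}) \<and> sat w \<tau> f"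
    then obtain \<tau> where "\<forall>y. y \<notin> set (x # xs) \<longrightarrow> \<tau> y = \<sigma> y"
      "\<forall>y\<in>set (x # xs). \<tau> y \<in> {1..length w}" "sat w \<tau> f"
      by blast
    then have "\<tau> x \<in> {1..length w}" "sat w (\<sigma>(x := \<tau> x)) (ex_list xs f)"
      using Cons.IH by auto
    then show "sat w \<sigma> (ex_list (x # xs) f)"
      by (auto simp: ex_list_def)
  qed
qed

lemma sat_conj_list_guarded:
  assumes "a \<in> set xs" and "\<And>x. x \<in> set xs \<Longrightarrow> sat w \<sigma> (G x) \<longleftrightarrow> x = a"
  shows "sat w \<sigma> (conj_list (map (\<lambda>x. imp (G x) (F x)) xs)) \<longleftrightarrow> sat w \<sigma> (F a)"
  using assms by auto

lemma nquant_imp [simp]: "nquant (imp p q) = nquant p + nquant q"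
  by (simp add: imp_def)

lemma nquant_conj_list [simp]: "nquant (conj_list fs) = sum_list (map nquant fs)"
  by (induction fs) (auto simp: conj_list_def)

lemma nquant_disj_list [simp]: "nquant (disj_list fs) = sum_list (map nquant fs)"
  by (induction fs) (auto simp: disj_list_def)

lemma nquant_ex_list [simp]: "nquant (ex_list xs f) = length xs + nquant f"
  by (induction xs) (auto simp: ex_list_def)

lemma nquant_literal [simp]: "nquant (literal b f) = nquant f"
  by (simp add: literal_def)

lemma free_vars_imp [simp]: "free_vars (imp p q) = free_vars p \<union> free_vars q"
  by (simp add: imp_def)

lemma free_vars_conj_list [simp]: "free_vars (conj_list fs) = \<Union> (free_vars ` set fs)"
  by (induction fs) (auto simp: conj_list_def)

lemma free_vars_disj_list [simp]: "free_vars (disj_list fs) = \<Union> (free_vars ` set fs)"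
  by (induction fs) (auto simp: disj_list_def)

lemma free_vars_ex_list [simp]: "free_vars (ex_list xs f) = free_vars f - set xs"
  by (induction xs) (auto simp: ex_list_def)

lemma free_vars_literal [simp]: "free_vars (literal b f) = free_vars f"
  by (simp add: literal_def)

section \<open>Bisection of an interval\<close>

text \<open>
  The variables a and b hold the endpoints of an interval of length 2^s. Variable v is
  bound to the midpoint and v + 1, v + 2 are universally bound to the endpoints of either
  half, so one recursive call serves both halves and each level costs three quantifiers.
  The matrix M is evaluated at every unit interval, whose endpoints sit in the variables
  bisect_left and bisect_right; whether v + 1 was bound to the left endpoint
  at a level is a bit of the offset of that unit interval.
\<close>

fun bisect :: "nat \<Rightarrow> nat \<Rightarrow> nat \<Rightarrow> nat \<Rightarrow> fo \<Rightarrow> fo" where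
  "bisect 0 a b v M = Conj (Less (Var a) (Var b))
      (Conj (All v (Neg (Conj (Less (Var a) (Var v)) (Less (Var v) (Var b))))) M)"
| "bisect (Suc s) a b v M = Ex v (All (Suc v) (All (Suc (Suc v))
      (imp (Disj (Conj (Eq (Var (Suc v)) (Var a)) (Eq (Var (Suc (Suc v))) (Var v)))
                 (Conj (Eq (Var (Suc v)) (Var v)) (Eq (Var (Suc (Suc v))) (Var b))))
           (bisect s (Suc v) (Suc (Suc v)) (v + 3) M))))"

fun bisect_left :: "nat \<Rightarrow> nat \<Rightarrow> nat \<Rightarrow> nat" where
  "bisect_left 0 a v = a"
| "bisect_left (Suc s) a v = bisect_left s (Suc v) (v + 3)"

fun bisect_right :: "nat \<Rightarrow> nat \<Rightarrow> nat \<Rightarrow> nat" where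
  "bisect_right 0 b v = b"
| "bisect_right (Suc s) b v = bisect_right s (Suc (Suc v)) (v + 3)"

fun bisect_offset :: "nat \<Rightarrow> nat \<Rightarrow> nat \<Rightarrow> (nat \<Rightarrow> nat) \<Rightarrow> nat" where
  "bisect_offset 0 a v \<sigma> = 0"
| "bisect_offset (Suc s) a v \<sigma> =
     (if \<sigma> (Suc v) = \<sigma> a then 0 else 2 ^ s) + bisect_offset s (Suc v) (v + 3) \<sigma>"

fun offset_is :: "nat \<Rightarrow> nat \<Rightarrow> nat \<Rightarrow> nat \<Rightarrow> fo" where
  "offset_is 0 a v j = (if j = 0 then FTrue else Neg FTrue)"
| "offset_is (Suc s) a v j =
     (if j < 2 ^ s then Conj (Eq (Var (Suc v)) (Var a)) (offset_is s (Suc v) (v + 3) j)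
      else Conj (Neg (Eq (Var (Suc v)) (Var a))) (offset_is s (Suc v) (v + 3) (j - 2 ^ s)))"

definition bisect_leaf :: "nat \<Rightarrow> nat \<Rightarrow> nat \<Rightarrow> nat \<Rightarrow> (nat \<Rightarrow> nat) \<Rightarrow> (nat \<Rightarrow> nat) \<Rightarrow> bool" where
  "bisect_leaf s a b v \<sigma> \<sigma>' \<longleftrightarrow> (\<forall>x<v. \<sigma>' x = \<sigma> x) \<and>
     \<sigma>' (bisect_right s b v) = \<sigma>' (bisect_left s a v) + 1 \<and>
     \<sigma>' (bisect_left s a v) = \<sigma> a + bisect_offset s a v \<sigma>'"

lemma bisect_offset_less: "bisect_offset s a v \<sigma> < 2 ^ s"
proof (induction s arbitrary: a v)
  case (Suc s)
  have "bisect_offset s (Suc v) (v + 3) \<sigma> < 2 ^ s"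
    by (rule Suc)
  then show ?case
    by simp
qed simp

lemma sat_offset_is: "sat w \<sigma> (offset_is s a v j) \<longleftrightarrow> bisect_offset s a v \<sigma> = j"
proof (induction s arbitrary: a v j)
  case (Suc s)
  then show ?case
    using bisect_offset_less[of s "Suc v" "v + 3" \<sigma>] by auto
qed simp

lemma bisect_leaf_Suc:
  assumes "a < v" and "bisect_leaf s (Suc v) (Suc (Suc v)) (v + 3) \<tau> \<sigma>'"
    and "\<forall>x<v. \<tau> x = \<sigma> x" and "\<tau> (Suc v) = \<sigma> a \<or> \<tau> (Suc v) = \<sigma> a + 2 ^ s"
  shows "bisect_leaf (Suc s) a b v \<sigma> \<sigma>'"
proof -
  have agree: "\<forall>x<v. \<sigma>' x = \<sigma> x" and "\<sigma>' (Suc v) = \<tau> (Suc v)"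
    using assms(2,3) by (auto simp: bisect_leaf_def)
  moreover have "\<sigma>' a = \<sigma> a"
    using agree assms(1) by blast
  ultimately have "\<tau> (Suc v) + bisect_offset s (Suc v) (v + 3) \<sigma>' = \<sigma> a + bisect_offset (Suc s) a v \<sigma>'"
    using assms(4) by auto
  then show ?thesis
    using assms(2) agree by (simp add: bisect_leaf_def)
qed

lemma sat_bisectD:
  assumes "sat w \<sigma> (bisect s a b v M)" and "a < v" and "b < v"
    and "\<sigma> a \<in> {1..length w}" and "\<sigma> b \<in> {1..length w}"
  shows "\<sigma> b = \<sigma> a + 2 ^ s \<and> (\<forall>p\<in>{\<sigma> a..\<sigma> b}. \<exists>\<sigma>'. bisect_leaf s a b v \<sigma> \<sigma>' \<and> sat w \<sigma>' M \<and>
           p \<in> {\<sigma>' (bisect_left s a v), \<sigma>' (bisect_right s b v)})"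
  using assms
proof (induction s arbitrary: a b v \<sigma>)
  case 0
  then have "\<sigma> a < \<sigma> b" and M: "sat w \<sigma> M"
    and gap: "\<forall>i\<in>{1..length w}. \<not> (\<sigma> a < i \<and> i < \<sigma> b)"
    by auto
  then have "\<sigma> b = \<sigma> a + 1"
    using gap[rule_format, of "\<sigma> a + 1"] "0.prems"(5) by fastforce
  then show ?case
    using M by (auto simp: bisect_leaf_def intro!: exI[of _ \<sigma>])
next
  case (Suc s)
  from Suc.prems(1) obtain z where z: "z \<in> {1..length w}" and halves:
    "\<forall>c\<in>{1..length w}. \<forall>d\<in>{1..length w}. (c = \<sigma> a \<and> d = z) \<or> (c = z \<and> d = \<sigma> b) \<longrightarrow>
       sat w (\<sigma>(v := z, Suc v := c, Suc (Suc v) := d)) (bisect s (Suc v) (Suc (Suc v)) (v + 3) M)"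
    using Suc.prems(2,3) by auto
  define \<sigma>L where "\<sigma>L = \<sigma>(v := z, Suc v := \<sigma> a, Suc (Suc v) := z)"
  define \<sigma>R where "\<sigma>R = \<sigma>(v := z, Suc v := z, Suc (Suc v) := \<sigma> b)"
  have \<sigma>L: "\<sigma>L (Suc v) = \<sigma> a" "\<sigma>L (Suc (Suc v)) = z"
    by (simp_all add: \<sigma>L_def)
  have "sat w \<sigma>L (bisect s (Suc v) (Suc (Suc v)) (v + 3) M)"
    using halves z Suc.prems(4) by (simp add: \<sigma>L_def)
  then have left: "z = \<sigma> a + 2 ^ s \<and> (\<forall>p\<in>{\<sigma> a..z}. \<exists>\<sigma>'.
      bisect_leaf s (Suc v) (Suc (Suc v)) (v + 3) \<sigma>L \<sigma>' \<and> sat w \<sigma>' M \<and>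
      p \<in> {\<sigma>' (bisect_left (Suc s) a v), \<sigma>' (bisect_right (Suc s) b v)})"
    using Suc.IH[of \<sigma>L "Suc v" "Suc (Suc v)" "v + 3"] z Suc.prems(4) unfolding \<sigma>L by simp
  have \<sigma>R: "\<sigma>R (Suc v) = z" "\<sigma>R (Suc (Suc v)) = \<sigma> b"
    by (simp_all add: \<sigma>R_def)
  have "sat w \<sigma>R (bisect s (Suc v) (Suc (Suc v)) (v + 3) M)"
    using halves z Suc.prems(5) by (simp add: \<sigma>R_def)
  then have right: "\<sigma> b = z + 2 ^ s \<and> (\<forall>p\<in>{z..\<sigma> b}. \<exists>\<sigma>'.
      bisect_leaf s (Suc v) (Suc (Suc v)) (v + 3) \<sigma>R \<sigma>' \<and> sat w \<sigma>' M \<and>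
      p \<in> {\<sigma>' (bisect_left (Suc s) a v), \<sigma>' (bisect_right (Suc s) b v)})"
    using Suc.IH[of \<sigma>R "Suc v" "Suc (Suc v)" "v + 3"] z Suc.prems(5) unfolding \<sigma>R by simp
  have "\<exists>\<sigma>'. bisect_leaf (Suc s) a b v \<sigma> \<sigma>' \<and> sat w \<sigma>' M \<and>
      p \<in> {\<sigma>' (bisect_left (Suc s) a v), \<sigma>' (bisect_right (Suc s) b v)}"
    if p: "p \<in> {\<sigma> a..\<sigma> b}" for p
  proof (cases "p \<le> z")
    case True
    then have "p \<in> {\<sigma> a..z}"
      using p by simp
    then obtain \<sigma>' where "bisect_leaf s (Suc v) (Suc (Suc v)) (v + 3) \<sigma>L \<sigma>'" "sat w \<sigma>' M"
      "p \<in> {\<sigma>' (bisect_left (Suc s) a v), \<sigma>' (bisect_right (Suc s) b v)}"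
      using left by blast
    then show ?thesis
      using bisect_leaf_Suc[of a v s \<sigma>L \<sigma>' \<sigma> b] Suc.prems(2) by (auto simp: \<sigma>L_def)
  next
    case False
    then have "p \<in> {z..\<sigma> b}"
      using p by simp
    then obtain \<sigma>' where "bisect_leaf s (Suc v) (Suc (Suc v)) (v + 3) \<sigma>R \<sigma>'" "sat w \<sigma>' M"
      "p \<in> {\<sigma>' (bisect_left (Suc s) a v), \<sigma>' (bisect_right (Suc s) b v)}"
      using right by blast
    then show ?thesis
      using bisect_leaf_Suc[of a v s \<sigma>R \<sigma>' \<sigma> b] Suc.prems(2) left by (auto simp: \<sigma>R_def)
  qed
  then show ?case
    using left right by auto
qed

lemma sat_bisectI:
  assumes "a < v" and "b < v" and "1 \<le> \<sigma> a" and "\<sigma> b \<le> length w" and "\<sigma> b = \<sigma> a + 2 ^ s"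
    and "\<And>\<sigma>'. bisect_leaf s a b v \<sigma> \<sigma>' \<Longrightarrow> sat w \<sigma>' M"
  shows "sat w \<sigma> (bisect s a b v M)"
  using assms
proof (induction s arbitrary: a b v \<sigma>)
  case 0
  then show ?case
    using "0.prems"(6)[of \<sigma>] by (auto simp: bisect_leaf_def)
next
  case (Suc s)
  define z where "z = \<sigma> a + 2 ^ s"
  have "sat w (\<sigma>(v := z, Suc v := c, Suc (Suc v) := d)) (bisect s (Suc v) (Suc (Suc v)) (v + 3) M)"
    if cd: "c \<in> {1..length w}" "d \<in> {1..length w}" "(c = \<sigma> a \<and> d = z) \<or> (c = z \<and> d = \<sigma> b)"
    for c d
  proof (rule Suc.IH)
    let ?\<tau> = "\<sigma>(v := z, Suc v := c, Suc (Suc v) := d)"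
    show "?\<tau> (Suc (Suc v)) = ?\<tau> (Suc v) + 2 ^ s"
      using cd Suc.prems(5) by (auto simp: z_def)
    show "sat w \<sigma>' M" if "bisect_leaf s (Suc v) (Suc (Suc v)) (v + 3) ?\<tau> \<sigma>'" for \<sigma>'
      using bisect_leaf_Suc[OF Suc.prems(1) that] cd Suc.prems(1,6) by (auto simp: z_def)
  qed (use cd in auto)
  moreover have "z \<in> {1..length w}"
    using Suc.prems(3-5) by (auto simp: z_def)
  ultimately show ?case
    using Suc.prems(1,2) by (auto intro!: bexI[of _ z])
qed

lemma nquant_bisect [simp]: "nquant (bisect s a b v M) = 3 * s + 1 + nquant M"
  by (induction s arbitrary: a b v) auto

lemma nquant_offset_is [simp]: "nquant (offset_is s a v j) = 0"
  by (induction s arbitrary: a v j) auto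

lemma free_vars_bisect: "free_vars (bisect s a b v M) \<subseteq> {a, b} \<union> (free_vars M - {v..<v + 3 * s})"
proof (induction s arbitrary: a b v)
  case (Suc s)
  have "free_vars (bisect s (Suc v) (Suc (Suc v)) (v + 3) M)
      \<subseteq> {Suc v, Suc (Suc v)} \<union> (free_vars M - {v + 3..<v + 3 + 3 * s})"
    by (rule Suc)
  then show ?case
    by auto
qed auto

lemma free_vars_offset_is: "free_vars (offset_is s a v j) \<subseteq> {a} \<union> {v..<v + 3 * s}"
proof (induction s arbitrary: a v j)
  case (Suc s)
  have "free_vars (offset_is s (Suc v) (v + 3) j') \<subseteq> {Suc v} \<union> {v + 3..<v + 3 + 3 * s}" for j'
    by (rule Suc)
  then show ?case
    by (fastforce split: if_splits)
qed simp

lemma bisect_left_mem: "bisect_left s a v \<in> {a} \<union> {v..<v + 3 * s}"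
proof (induction s arbitrary: a v)
  case (Suc s)
  have "bisect_left s (Suc v) (v + 3) \<in> {Suc v} \<union> {v + 3..<v + 3 + 3 * s}"
    by (rule Suc)
  then show ?case
    by auto
qed simp

lemma bisect_right_mem: "bisect_right s b v \<in> {b} \<union> {v..<v + 3 * s}"
proof (induction s arbitrary: b v)
  case (Suc s)
  have "bisect_right s (Suc (Suc v)) (v + 3) \<in> {Suc (Suc v)} \<union> {v + 3..<v + 3 + 3 * s}"
    by (rule Suc)
  then show ?case
    by auto
qed simp

section \<open>Order types of tuples of positions\<close>

definition same_order_type :: "nat \<Rightarrow> (nat \<Rightarrow> nat) \<Rightarrow> (nat \<Rightarrow> nat) \<Rightarrow> bool" where
  "same_order_type k e e' \<longleftrightarrow> (\<forall>i<k. (e i = 1 \<longleftrightarrow> e' i = 1) \<and> (\<forall>j<k. e i < e j \<longleftrightarrow> e' i < e' j))"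

definition order_type :: "(nat \<Rightarrow> nat) \<Rightarrow> nat \<Rightarrow> fo" where
  "order_type e k = conj_list (map (\<lambda>i. Conj (literal (e i = 1) (Eq (Var i) MinC))
      (conj_list (map (\<lambda>j. literal (e i < e j) (Less (Var i) (Var j))) [0..<k]))) [0..<k])"

definition order_code :: "nat \<Rightarrow> nat \<Rightarrow> (bool list \<Rightarrow> nat \<Rightarrow> nat) \<Rightarrow> bool" where
  "order_code n k enc \<longleftrightarrow> (\<forall>w. length w = n \<longrightarrow> (\<forall>i<k. enc w i \<in> {1..n})) \<and>
     (\<forall>w w'. length w = n \<longrightarrow> length w' = n \<longrightarrow> same_order_type k (enc w) (enc w') \<longrightarrow> w = w')"

lemma sat_order_type [simp]: "sat w \<sigma> (order_type e k) \<longleftrightarrow> same_order_type k \<sigma> e"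
  by (auto simp: order_type_def same_order_type_def)

lemma nquant_order_type [simp]: "nquant (order_type e k) = 0"
  by (simp add: order_type_def sum_list_eq_0_iff)

lemma free_vars_order_type: "free_vars (order_type e k) \<subseteq> {..<k}"
  by (auto simp: order_type_def)

lemma order_code_bits: "2 \<le> n \<Longrightarrow> order_code n n (\<lambda>w i. if w ! i then 1 else 2)"
  by (auto simp: order_code_def same_order_type_def intro!: nth_equalityI split: if_splits)

lemma card_permutes_less:
  assumes "p permutes {..<k}" and "i < k"
  shows "card {j. j < k \<and> p j < p i} = p i"
proof -
  have "p ` {j. j < k \<and> p j < p i} = {..<p i}"
  proof
    show "{..<p i} \<subseteq> p ` {j. j < k \<and> p j < p i}"
    proof
      fix x assume x: "x \<in> {..<p i}"
      have "p i < k"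
        using permutes_in_image[OF assms(1)] assms(2) by auto
      then have "x \<in> p ` {..<k}"
        using x permutes_image[OF assms(1)] by auto
      then show "x \<in> p ` {j. j < k \<and> p j < p i}"
        using x by auto
    qed
  qed auto
  moreover have "inj_on p {j. j < k \<and> p j < p i}"
    using permutes_inj_on[OF assms(1)] .
  ultimately show ?thesis
    by (metis card_image card_lessThan)
qed

lemma order_code_permutations:
  assumes "k \<le> n" and "(2::nat) ^ n \<le> fact k"
  shows "\<exists>enc. order_code n k enc"
proof -
  let ?strings = "{w :: bool list. length w = n}"
  let ?perms = "{p. p permutes {..<k}}"
  have "card ?strings \<le> card ?perms"
    using assms(2) card_lists_length_eq[of "UNIV :: bool set" n] card_permutations[of "{..<k}" k]
    by simp
  then obtain g where g: "g ` ?strings \<subseteq> ?perms" "inj_on g ?strings"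
    using card_le_inj[of ?strings ?perms] finite_lists_length_eq[of "UNIV :: bool set" n]
      finite_permutations[of "{..<k}"] by auto
  have "order_code n k (\<lambda>w i. g w i + 1)"
    unfolding order_code_def
  proof (intro conjI allI impI)
    fix w :: "bool list" and i assume "length w = n" and "i < k"
    then have "g w permutes {..<k}"
      using g(1) by auto
    then show "g w i + 1 \<in> {1..n}"
      using permutes_in_image[of "g w" "{..<k}" i] \<open>i < k\<close> assms(1) by auto
  next
    fix w w' :: "bool list" assume w: "length w = n" and w': "length w' = n"
      and same: "same_order_type k (\<lambda>i. g w i + 1) (\<lambda>i. g w' i + 1)"
    have p: "g w permutes {..<k}" and p': "g w' permutes {..<k}"
      using g(1) w w' by auto
    have "g w i = g w' i" for i
    proof (cases "i < k")
      case True
      have "{j. j < k \<and> g w j < g w i} = {j. j < k \<and> g w' j < g w' i}"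
        using same True by (auto simp: same_order_type_def)
      then show ?thesis
        using card_permutes_less[OF p True] card_permutes_less[OF p' True] by simp
    next
      case False
      then show ?thesis
        using permutes_not_in[OF p] permutes_not_in[OF p'] by auto
    qed
    then show "w = w'"
      using g(2) w w' by (auto dest: inj_onD)
  qed
  then show ?thesis
    by blast
qed

section \<open>The separating sentence\<close>

text \<open>
  Variables 0, ..., k - 1 hold the positions naming the string, k and k + 1 the right end
  of the first and the left end of the second block, k + 2 and k + 3 the endpoints of the
  block being bisected, and the bisection uses the variables from k + 4 on.
\<close>

definition strings :: "nat \<Rightarrow> bool list list" where
  "strings n = List.n_lists n [False, True]"

lemma set_strings [simp]: "set (strings n) = {w. length w = n}"
  by (auto simp: strings_def set_n_lists)

definition leaf_bits :: "(bool list \<Rightarrow> nat \<Rightarrow> nat) \<Rightarrow> nat \<Rightarrow> nat \<Rightarrow> nat \<Rightarrow> nat \<Rightarrow> fo" where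
  "leaf_bits enc n k T P = conj_list (map (\<lambda>w0. imp (order_type (enc w0) k)
      (Conj (literal (w0 ! (P - 1)) (Pred (Var (bisect_left T (k + 2) (k + 4)))))
            (literal (w0 ! P) (Pred (Var (bisect_right T (k + 3) (k + 4)))))))
      (strings n))"

text \<open>The position P of the leaf is read off quantifier-free: from whether the block starts
  at min and from the offset recorded by the bisection.\<close>

definition leaf_formula :: "(bool list \<Rightarrow> nat \<Rightarrow> nat) \<Rightarrow> nat \<Rightarrow> nat \<Rightarrow> nat \<Rightarrow> fo" where
  "leaf_formula enc n k T = conj_list (map (\<lambda>p.
      imp (Conj (literal (fst p) (Eq (Var (k + 2)) MinC)) (offset_is T (k + 2) (k + 4) (snd p)))
          (leaf_bits enc n k T ((if fst p then 1 else n - 2 ^ T) + snd p)))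
      (List.product [True, False] [0..<2 ^ T]))"

definition blocks :: "nat \<Rightarrow> nat \<Rightarrow> fo \<Rightarrow> fo" where
  "blocks k T M = Ex k (Ex (k + 1) (All (k + 2) (All (k + 3)
     (imp (Disj (Conj (Eq (Var (k + 2)) MinC) (Eq (Var (k + 3)) (Var k)))
                (Conj (Eq (Var (k + 2)) (Var (k + 1))) (Eq (Var (k + 3)) MaxC)))
          (bisect T (k + 2) (k + 3) (k + 4) M)))))"

definition separator :: "(bool list \<Rightarrow> nat \<Rightarrow> nat) \<Rightarrow> nat \<Rightarrow> nat \<Rightarrow> nat \<Rightarrow> bool list set \<Rightarrow> fo" where
  "separator enc n k T A = ex_list [0..<k]
     (Conj (disj_list (map (\<lambda>w0. order_type (enc w0) k) (filter (\<lambda>w0. w0 \<in> A) (strings n))))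
           (blocks k T (leaf_formula enc n k T)))"

lemma sat_leaf_bits:
  "sat w \<sigma> (leaf_bits enc n k T P) \<longleftrightarrow>
    (\<forall>w0. length w0 = n \<longrightarrow> same_order_type k \<sigma> (enc w0) \<longrightarrow>
       w ! (\<sigma> (bisect_left T (k + 2) (k + 4)) - 1) = w0 ! (P - 1) \<and>
       w ! (\<sigma> (bisect_right T (k + 3) (k + 4)) - 1) = w0 ! P)"
  by (auto simp: leaf_bits_def)

lemma sat_leaf_formula:
  "sat w \<sigma> (leaf_formula enc n k T) \<longleftrightarrow>
     sat w \<sigma> (leaf_bits enc n k T ((if \<sigma> (k + 2) = 1 then 1 else n - 2 ^ T) + bisect_offset T (k + 2) (k + 4) \<sigma>))"
  unfolding leaf_formula_def
  using bisect_offset_less[of T "k + 2" "k + 4" \<sigma>]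
  by (subst sat_conj_list_guarded[where a = "(\<sigma> (k + 2) = 1, bisect_offset T (k + 2) (k + 4) \<sigma>)"])
    (auto simp: sat_offset_is prod_eq_iff)

lemma sat_blocks:
  "sat w \<sigma> (blocks k T M) \<longleftrightarrow> (\<exists>y1\<in>{1..length w}. \<exists>y2\<in>{1..length w}.
     \<forall>c\<in>{1..length w}. \<forall>d\<in>{1..length w}. (c = 1 \<and> d = y1) \<or> (c = y2 \<and> d = length w) \<longrightarrow>
       sat w (\<sigma>(k := y1, k + 1 := y2, k + 2 := c, k + 3 := d)) (bisect T (k + 2) (k + 3) (k + 4) M))"
  by (simp add: blocks_def)

lemma sat_blocks_leaf_formulaI:
  assumes enc: "order_code n k enc" and len: "length w = n"
    and \<sigma>: "\<forall>i<k. \<sigma> i = enc w i" and T: "2 ^ T \<le> n - 1"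
  shows "sat w \<sigma> (blocks k T (leaf_formula enc n k T))"
proof -
  let ?L = "2 ^ T :: nat"
  have n_ge_2: "2 \<le> n"
    using T one_le_power[of "2::nat" T] by linarith
  have leaf: "sat w \<sigma>' (leaf_formula enc n k T)"
    if "bisect_leaf T (k + 2) (k + 3) (k + 4) (\<sigma>(k := y1, k + 1 := y2, k + 2 := c, k + 3 := d)) \<sigma>'"
      and "(if c = 1 then 1 else n - ?L) = c" for \<sigma>' y1 y2 c d
  proof -
    have "\<sigma>' (k + 2) = c" and "\<forall>i<k. \<sigma>' i = enc w i"
      using that(1) \<sigma> by (auto simp: bisect_leaf_def)
    moreover have "w0 = w" if "length w0 = n" and "same_order_type k \<sigma>' (enc w0)" for w0
      using enc that len \<open>\<forall>i<k. \<sigma>' i = enc w i\<close>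
      unfolding order_code_def same_order_type_def by (metis (no_types, lifting))
    ultimately show ?thesis
      using that by (auto simp: sat_leaf_formula sat_leaf_bits bisect_leaf_def)
  qed
  have "sat w (\<sigma>(k := 1 + ?L, k + 1 := n - ?L, k + 2 := c, k + 3 := d))
      (bisect T (k + 2) (k + 3) (k + 4) (leaf_formula enc n k T))"
    if "c \<in> {1..n}" "d \<in> {1..n}" "(c = 1 \<and> d = 1 + ?L) \<or> (c = n - ?L \<and> d = n)" for c d
  proof (rule sat_bisectI)
    show "sat w \<sigma>' (leaf_formula enc n k T)"
      if "bisect_leaf T (k + 2) (k + 3) (k + 4) (\<sigma>(k := 1 + ?L, k + 1 := n - ?L, k + 2 := c, k + 3 := d)) \<sigma>'"
      for \<sigma>'
      by (rule leaf[OF that]) (use \<open>(c = 1 \<and> d = 1 + ?L) \<or> (c = n - ?L \<and> d = n)\<close> in auto)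
  qed (use that T len in auto)
  moreover have "1 + ?L \<in> {1..n}" "n - ?L \<in> {1..n}"
    using T n_ge_2 by auto
  ultimately show ?thesis
    unfolding sat_blocks len by (intro bexI[of _ "1 + ?L"] bexI[of _ "n - ?L"] ballI impI) auto
qed

lemma sat_blocks_leaf_formula_imp_eq:
  assumes sat: "sat w \<sigma> (blocks k T (leaf_formula enc n k T))"
    and len: "length w = n" and len0: "length w0 = n" and same: "same_order_type k \<sigma> (enc w0)"
    and T: "2 ^ T \<le> n - 1" "n - 1 \<le> 2 * 2 ^ T"
  shows "w = w0"
proof -
  let ?L = "2 ^ T :: nat"
  let ?M = "leaf_formula enc n k T"
  have n_ge_2: "2 \<le> n"
    using T one_le_power[of "2::nat" T] by linarith
  from sat obtain y1 y2 where y: "y1 \<in> {1..n}" "y2 \<in> {1..n}" and guarded: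
    "\<forall>c\<in>{1..n}. \<forall>d\<in>{1..n}. (c = 1 \<and> d = y1) \<or> (c = y2 \<and> d = n) \<longrightarrow>
       sat w (\<sigma>(k := y1, k + 1 := y2, k + 2 := c, k + 3 := d)) (bisect T (k + 2) (k + 3) (k + 4) ?M)"
    unfolding sat_blocks len by blast
  define \<rho>1 where "\<rho>1 = \<sigma>(k := y1, k + 1 := y2, k + 2 := 1, k + 3 := y1)"
  define \<rho>2 where "\<rho>2 = \<sigma>(k := y1, k + 1 := y2, k + 2 := y2, k + 3 := n)"
  have \<rho>: "\<rho>1 (k + 2) = 1" "\<rho>1 (k + 3) = y1" "\<rho>2 (k + 2) = y2" "\<rho>2 (k + 3) = n"
    "\<forall>i<k. \<rho>1 i = \<sigma> i \<and> \<rho>2 i = \<sigma> i"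
    by (simp_all add: \<rho>1_def \<rho>2_def)
  have leaf: "w ! (p - 1) = w0 ! (p - 1)"
    if "bisect_leaf T (k + 2) (k + 3) (k + 4) \<rho> \<sigma>'" and "\<forall>i<k. \<rho> i = \<sigma> i"
      and "sat w \<sigma>' ?M" and "(if \<rho> (k + 2) = 1 then 1 else n - ?L) = \<rho> (k + 2)"
      and "p \<in> {\<sigma>' (bisect_left T (k + 2) (k + 4)), \<sigma>' (bisect_right T (k + 3) (k + 4))}"
    for \<rho> \<sigma>' p
  proof -
    have "\<sigma>' (k + 2) = \<rho> (k + 2)" and "same_order_type k \<sigma>' (enc w0)"
      using that(1,2) same by (auto simp: bisect_leaf_def same_order_type_def)
    then show ?thesis
      using that len0 by (auto simp: sat_leaf_formula sat_leaf_bits bisect_leaf_def)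
  qed
  have ends: "1 \<in> {1..n}" "n \<in> {1..n}"
    using n_ge_2 by auto
  have "sat w \<rho>1 (bisect T (k + 2) (k + 3) (k + 4) ?M)" "sat w \<rho>2 (bisect T (k + 2) (k + 3) (k + 4) ?M)"
    using guarded[rule_format, of 1 y1] guarded[rule_format, of y2 n] ends y
    by (simp_all add: \<rho>1_def \<rho>2_def)
  then have first: "y1 = 1 + ?L \<and> (\<forall>p\<in>{1..y1}. \<exists>\<sigma>'. bisect_leaf T (k + 2) (k + 3) (k + 4) \<rho>1 \<sigma>' \<and>
        sat w \<sigma>' ?M \<and> p \<in> {\<sigma>' (bisect_left T (k + 2) (k + 4)), \<sigma>' (bisect_right T (k + 3) (k + 4))})"
    and second: "n = y2 + ?L \<and> (\<forall>p\<in>{y2..n}. \<exists>\<sigma>'. bisect_leaf T (k + 2) (k + 3) (k + 4) \<rho>2 \<sigma>' \<and>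
        sat w \<sigma>' ?M \<and> p \<in> {\<sigma>' (bisect_left T (k + 2) (k + 4)), \<sigma>' (bisect_right T (k + 3) (k + 4))})"
    using sat_bisectD[of w \<rho>1 T "k + 2" "k + 3" "k + 4" ?M] sat_bisectD[of w \<rho>2 T "k + 2" "k + 3" "k + 4" ?M]
      ends y len unfolding \<rho> by auto
  have agree: "w ! (p - 1) = w0 ! (p - 1)" if p: "p \<in> {1..n}" for p
  proof (cases "p \<le> y1")
    case True
    then have "p \<in> {1..y1}"
      using p by simp
    then obtain \<sigma>' where "bisect_leaf T (k + 2) (k + 3) (k + 4) \<rho>1 \<sigma>'" "sat w \<sigma>' ?M"
      "p \<in> {\<sigma>' (bisect_left T (k + 2) (k + 4)), \<sigma>' (bisect_right T (k + 3) (k + 4))}"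
      using first by blast
    then show ?thesis
      using leaf \<rho> by simp
  next
    case False
    then have "p \<in> {y2..n}"
      using first second p T by auto
    then obtain \<sigma>' where "bisect_leaf T (k + 2) (k + 3) (k + 4) \<rho>2 \<sigma>'" "sat w \<sigma>' ?M"
      "p \<in> {\<sigma>' (bisect_left T (k + 2) (k + 4)), \<sigma>' (bisect_right T (k + 3) (k + 4))}"
      using second by blast
    moreover have "(if y2 = 1 then 1 else n - ?L) = y2"
      using second by auto
    ultimately show ?thesis
      using leaf \<rho> by simp
  qed
  show "w = w0"
  proof (rule nth_equalityI)
    show "w ! i = w0 ! i" if "i < length w" for i
      using agree[of "Suc i"] that len by simp
  qed (use len len0 in simp)
qed

lemma holds_separator:
  assumes "order_code n k enc" and "w \<in> A" and "length w = n" and "2 ^ T \<le> n - 1"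
  shows "holds w (separator enc n k T A)"
proof -
  define \<tau> where "\<tau> = (\<lambda>i. if i < k then enc w i else 1)"
  have "sat w \<tau> (blocks k T (leaf_formula enc n k T))"
    using sat_blocks_leaf_formulaI assms by (simp add: \<tau>_def)
  moreover have "\<forall>i<k. enc w i \<in> {1..n}"
    using assms(1,3) by (auto simp: order_code_def)
  ultimately show ?thesis
    unfolding holds_def separator_def sat_ex_list using assms(2,3)
    by (intro exI[of _ \<tau>]) (auto simp: \<tau>_def same_order_type_def)
qed

lemma holds_separator_imp_mem:
  assumes "holds w (separator enc n k T A)" and "length w = n"
    and "2 ^ T \<le> n - 1" and "n - 1 \<le> 2 * 2 ^ T"
  shows "w \<in> A"
proof -
  obtain \<tau> w0 where "w0 \<in> A" "length w0 = n" "same_order_type k \<tau> (enc w0)"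
    "sat w \<tau> (blocks k T (leaf_formula enc n k T))"
    using assms(1) unfolding holds_def separator_def sat_ex_list by auto
  then show ?thesis
    using sat_blocks_leaf_formula_imp_eq assms(2-4) by metis
qed

lemma nquant_separator: "nquant (separator enc n k T A) = k + 3 * T + 5"
  by (simp add: separator_def blocks_def leaf_formula_def leaf_bits_def case_prod_unfold
      sum_list_eq_0_iff)

lemma sentence_separator: "sentence (separator enc n k T A)"
proof -
  let ?vars = "{..<k} \<union> {k + 2, k + 3} \<union> {k + 4..<k + 4 + 3 * T}"
  have "free_vars (leaf_bits enc n k T P) \<subseteq> ?vars" for P
  proof -
    have "free_vars (leaf_bits enc n k T P)
        \<subseteq> {..<k} \<union> {bisect_left T (k + 2) (k + 4), bisect_right T (k + 3) (k + 4)}"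
      using free_vars_order_type by (auto simp: leaf_bits_def)
    then show ?thesis
      using bisect_left_mem[of T "k + 2" "k + 4"] bisect_right_mem[of T "k + 3" "k + 4"] by auto
  qed
  moreover have "free_vars (offset_is T (k + 2) (k + 4) j) \<subseteq> ?vars" for j
    using free_vars_offset_is[of T "k + 2" "k + 4" j] by auto
  ultimately have "free_vars (leaf_formula enc n k T) \<subseteq> ?vars"
    by (auto simp: leaf_formula_def)
  then have "free_vars (blocks k T (leaf_formula enc n k T)) \<subseteq> {..<k}"
    using free_vars_bisect[of T "k + 2" "k + 3" "k + 4" "leaf_formula enc n k T"]
    by (auto simp: blocks_def)
  then show ?thesis
    using free_vars_order_type by (fastforce simp: sentence_def separator_def)
qed

lemma separating_sentence:
  assumes "order_code n k enc" and "2 \<le> n"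
    and "A \<subseteq> {w. length w = n}" and "B \<subseteq> {w. length w = n}" and "A \<inter> B = {}"
  shows "\<exists>\<phi>. sentence \<phi> \<and> real (nquant \<phi>) \<le> real k + 3 * log 2 (real n) + 5 \<and>
           (\<forall>w\<in>A. holds w \<phi>) \<and> (\<forall>w\<in>B. \<not> holds w \<phi>)"
proof -
  have "1 \<le> n - 1"
    using assms(2) by simp
  then obtain T where T: "2 ^ T \<le> n - 1" "n - 1 < 2 ^ (T + 1)"
    using ex_power_ivl1[of 2 "n - 1"] by auto
  have "real T \<le> log 2 (real n)"
    using T(1) by (intro le_log_of_power) auto
  then have "real (nquant (separator enc n k T A)) \<le> real k + 3 * log 2 (real n) + 5"
    by (simp add: nquant_separator)
  moreover have "\<forall>w\<in>A. holds w (separator enc n k T A)"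
    using holds_separator[OF assms(1) _ _ T(1)] assms(3) by blast
  moreover have "\<forall>w\<in>B. \<not> holds w (separator enc n k T A)"
    using holds_separator_imp_mem[of _ enc n k T A] T assms(4,5) by force
  ultimately show ?thesis
    using sentence_separator by blast
qed

section \<open>Size of the order code\<close>

lemma pow_div_fact_le_exp:
  assumes "0 \<le> x"
  shows "x ^ k / fact k \<le> exp (x::real)"
proof -
  have s: "(\<lambda>n. x ^ n /\<^sub>R fact n) sums exp x"
    by (rule exp_converges)
  have "sum (\<lambda>n. x ^ n /\<^sub>R fact n) {k} \<le> suminf (\<lambda>n. x ^ n /\<^sub>R fact n)"
    by (rule sum_le_suminf) (use s assms in \<open>auto simp: sums_iff\<close>)
  then show ?thesis
    using s by (simp add: sums_iff divide_inverse mult.commute)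
qed

lemma pow2_le_fact:
  assumes "0 < k" and "real n \<le> real k * (log 2 (real k) - 1 / ln 2)"
  shows "(2::nat) ^ n \<le> fact k"
proof -
  have "real k ^ k \<le> exp (real k) * fact k"
    using pow_div_fact_le_exp[of "real k" k] by (simp add: divide_le_eq)
  then have "real k * ln (real k) - real k \<le> ln (fact k)"
    using assms(1) ln_le_cancel_iff[of "real k ^ k" "exp (real k) * fact k"]
    by (simp add: ln_realpow ln_mult)
  moreover have "real n * ln 2 \<le> real k * ln (real k) - real k"
    using mult_right_mono[OF assms(2), of "ln 2"] by (simp add: log_def algebra_simps)
  ultimately have "ln (2 ^ n) \<le> ln (real (fact k))"
    by (simp add: ln_realpow)
  then have "(2::real) ^ n \<le> real (fact k)"
    by (subst (asm) ln_le_cancel_iff) auto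
  then show ?thesis
    by (metis of_nat_fact of_nat_le_iff of_nat_numeral of_nat_power)
qed

lemma pow2_le_fact_ceiling:
  assumes "\<delta> > 0"
  shows "eventually (\<lambda>n. (2::nat) ^ n \<le> fact (nat \<lceil>(1 + \<delta>) * real n / log 2 (real n)\<rceil>)) sequentially"
proof -
  have "((\<lambda>n::nat. (log 2 (log 2 (real n)) + 1 / ln 2) / log 2 (real n)) \<longlongrightarrow> 0) sequentially"
    by real_asymp
  then have "eventually (\<lambda>n. (log 2 (log 2 (real n)) + 1 / ln 2) / log 2 (real n) < \<delta> / (1 + \<delta>)) sequentially"
    using assms by (intro order_tendstoD(2)) auto
  then show ?thesis
    using eventually_ge_at_top[of 2]
  proof eventually_elim
    case (elim n)
    define L where "L = log 2 (real n)"
    define c where "c = 1 / ln (2::real)"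
    define k0 where "k0 = (1 + \<delta>) * real n / L"
    define k where "k = nat \<lceil>k0\<rceil>"
    have "L > 0" "k0 > 0"
      using elim assms by (auto simp: L_def k0_def)
    have "log 2 k0 = log 2 ((1 + \<delta>) * real n) - log 2 L"
      using assms \<open>L > 0\<close> elim by (simp add: k0_def log_divide)
    also have "\<dots> = log 2 (1 + \<delta>) + L - log 2 L"
      using assms elim by (simp add: L_def log_mult)
    finally have "log 2 k0 = log 2 (1 + \<delta>) + L - log 2 L" .
    then have lk0: "log 2 k0 - c \<ge> L - log 2 L - c"
      using assms by simp
    txt \<open>Since log k0 \<ge> L - log L, the margin \<delta> in k0 absorbs the loss log L + c.\<close>
    have "(log 2 L + c) * (1 + \<delta>) < \<delta> * L"
      using elim assms \<open>L > 0\<close> by (simp add: L_def c_def field_simps)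
    then have margin: "L \<le> (1 + \<delta>) * (L - log 2 L - c)"
      by (simp add: algebra_simps)
    then have "0 < (1 + \<delta>) * (L - log 2 L - c)"
      using \<open>L > 0\<close> by linarith
    then have "0 < L - log 2 L - c"
      using assms by (simp add: zero_less_mult_iff)
    from margin have "real n * L \<le> real n * ((1 + \<delta>) * (L - log 2 L - c))"
      by (intro mult_left_mono) auto
    then have "real n \<le> k0 * (L - log 2 L - c)"
      using \<open>L > 0\<close> by (simp add: k0_def field_simps)
    also have "\<dots> \<le> k0 * (log 2 k0 - c)"
      using lk0 \<open>k0 > 0\<close> by (simp add: mult_left_mono)
    also have "\<dots> \<le> real k * (log 2 (real k) - c)"
    proof (rule mult_mono)
      show "k0 \<le> real k" "log 2 k0 - c \<le> log 2 (real k) - c"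
        using \<open>k0 > 0\<close> by (auto simp: k_def)
      show "0 \<le> log 2 k0 - c"
        using \<open>0 < L - log 2 L - c\<close> lk0 by linarith
    qed simp
    finally show ?case
      using \<open>k0 > 0\<close> by (intro pow2_le_fact) (auto simp: k_def c_def L_def k0_def)
  qed
qed

lemma ceiling_quantifier_budget:
  assumes "\<delta> > 0"
  shows "eventually (\<lambda>n. real (nat \<lceil>(1 + \<delta>) * real n / log 2 (real n)\<rceil>) + 3 * log 2 (real n) + 5
           \<le> (1 + 2 * \<delta>) * real n / log 2 (real n)) sequentially"
proof -
  have "((\<lambda>n::nat. (3 * log 2 (real n) + 6) * log 2 (real n) / real n) \<longlongrightarrow> 0) sequentially"
    by real_asymp
  then have "eventually (\<lambda>n. (3 * log 2 (real n) + 6) * log 2 (real n) / real n < \<delta>) sequentially"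
    using assms by (intro order_tendstoD(2))
  then show ?thesis
    using eventually_ge_at_top[of 2]
  proof eventually_elim
    case (elim n)
    define L where "L = log 2 (real n)"
    have "L > 0"
      using elim by (simp add: L_def)
    then have "3 * L + 6 \<le> \<delta> * real n / L"
      using elim by (simp add: L_def field_simps)
    moreover have "real (nat \<lceil>(1 + \<delta>) * real n / L\<rceil>) < (1 + \<delta>) * real n / L + 1"
      using assms \<open>L > 0\<close> by (simp add: of_nat_nat) linarith
    ultimately show ?case
      using \<open>L > 0\<close> by (simp add: L_def[symmetric] field_simps)
  qed
qed

lemma order_code_budget:
  assumes "\<epsilon> > 0"
  shows "\<exists>C. \<forall>n\<ge>2. \<exists>k enc. order_code n k enc \<and>
           real k + 3 * log 2 (real n) + 5 \<le> (1 + \<epsilon>) * real n / log 2 (real n) + C"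
proof -
  define \<delta> where "\<delta> = \<epsilon> / 2"
  have "\<delta> > 0"
    using assms by (simp add: \<delta>_def)
  have "filterlim (\<lambda>n::nat. log 2 (real n)) at_top sequentially"
    by real_asymp
  then have "eventually (\<lambda>n. 1 + \<epsilon> \<le> log 2 (real n)) sequentially"
    by (simp add: filterlim_at_top)
  then have "eventually (\<lambda>n. 2 \<le> n \<and> 1 + \<epsilon> \<le> log 2 (real n) \<and>
      (2::nat) ^ n \<le> fact (nat \<lceil>(1 + \<delta>) * real n / log 2 (real n)\<rceil>) \<and>
      real (nat \<lceil>(1 + \<delta>) * real n / log 2 (real n)\<rceil>) + 3 * log 2 (real n) + 5
        \<le> (1 + \<epsilon>) * real n / log 2 (real n)) sequentially"
    using eventually_ge_at_top[of 2] pow2_le_fact_ceiling[OF \<open>\<delta> > 0\<close>]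
      ceiling_quantifier_budget[OF \<open>\<delta> > 0\<close>]
    by eventually_elim (simp add: \<delta>_def)
  then obtain N where N: "\<And>n. N \<le> n \<Longrightarrow> 2 \<le> n \<and> 1 + \<epsilon> \<le> log 2 (real n) \<and>
      (2::nat) ^ n \<le> fact (nat \<lceil>(1 + \<delta>) * real n / log 2 (real n)\<rceil>) \<and>
      real (nat \<lceil>(1 + \<delta>) * real n / log 2 (real n)\<rceil>) + 3 * log 2 (real n) + 5
        \<le> (1 + \<epsilon>) * real n / log 2 (real n)"
    unfolding eventually_sequentially by blast
  have "\<exists>k enc. order_code n k enc \<and>
      real k + 3 * log 2 (real n) + 5 \<le> (1 + \<epsilon>) * real n / log 2 (real n) + (4 * real N + 5)"
    if "2 \<le> n" for n
  proof (cases "N \<le> n")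
    case True
    define k where "k = nat \<lceil>(1 + \<delta>) * real n / log 2 (real n)\<rceil>"
    have "log 2 (real n) > 0"
      using N[OF True] by simp
    moreover have "(1 + \<epsilon>) * real n \<le> log 2 (real n) * real n"
      using N[OF True] by (intro mult_right_mono) auto
    ultimately have "(1 + \<epsilon>) * real n / log 2 (real n) \<le> real n"
      by (simp add: divide_le_eq mult.commute)
    then have "real k \<le> real n"
      using N[OF True] \<open>log 2 (real n) > 0\<close> unfolding k_def by linarith
    then obtain enc where "order_code n k enc"
      using order_code_permutations[of k n] N[OF True] by (auto simp: k_def)
    then show ?thesis
      using N[OF True] by (intro exI[of _ k]) (auto simp: k_def)
  next
    case False
    have "log 2 (real n) < real n"
      using log2_of_power_less[of n n] that by simp
    moreover have "real n < real N" and "0 \<le> (1 + \<epsilon>) * real n / log 2 (real n)"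
      using False assms that by auto
    ultimately show ?thesis
      using order_code_bits[OF that] by (intro exI[of _ n]) auto
  qed
  then show ?thesis
    by blast
qed

theorem mainTheorem19:
  shows "\<forall>\<epsilon>::real. \<epsilon> > 0 \<longrightarrow> (\<exists>C::real. \<forall>n::nat. \<forall>A B :: bool list set.
           n \<ge> 2 \<longrightarrow> A \<subseteq> {w. length w = n} \<longrightarrow> B \<subseteq> {w. length w = n} \<longrightarrow> A \<inter> B = {} \<longrightarrow>
           (\<exists>\<phi>. sentence \<phi> \<and> real (nquant \<phi>) \<le> (1 + \<epsilon>) * real n / log 2 (real n) + C \<and>
                 (\<forall>w\<in>A. holds w \<phi>) \<and> (\<forall>w\<in>B. \<not> holds w \<phi>)))"
proof (intro allI impI)
  fix \<epsilon> :: real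
  assume "\<epsilon> > 0"
  then obtain C where C: "\<And>n. 2 \<le> n \<Longrightarrow> \<exists>k enc. order_code n k enc \<and>
      real k + 3 * log 2 (real n) + 5 \<le> (1 + \<epsilon>) * real n / log 2 (real n) + C"
    using order_code_budget by blast
  show "\<exists>C. \<forall>n A B. n \<ge> 2 \<longrightarrow> A \<subseteq> {w. length w = n} \<longrightarrow> B \<subseteq> {w. length w = n} \<longrightarrow> A \<inter> B = {} \<longrightarrow>
      (\<exists>\<phi>. sentence \<phi> \<and> real (nquant \<phi>) \<le> (1 + \<epsilon>) * real n / log 2 (real n) + C \<and>
           (\<forall>w\<in>A. holds w \<phi>) \<and> (\<forall>w\<in>B. \<not> holds w \<phi>))"
  proof (intro exI[of _ C] allI impI)
    fix n :: nat and A B :: "bool list set"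
    assume "2 \<le> n" "A \<subseteq> {w. length w = n}" "B \<subseteq> {w. length w = n}" "A \<inter> B = {}"
    moreover obtain k enc where "order_code n k enc"
      and "real k + 3 * log 2 (real n) + 5 \<le> (1 + \<epsilon>) * real n / log 2 (real n) + C"
      using C \<open>2 \<le> n\<close> by blast
    ultimately show "\<exists>\<phi>. sentence \<phi> \<and> real (nquant \<phi>) \<le> (1 + \<epsilon>) * real n / log 2 (real n) + C \<and>
        (\<forall>w\<in>A. holds w \<phi>) \<and> (\<forall>w\<in>B. \<not> holds w \<phi>)"
      using separating_sentence by (meson order_trans)
  qed
qed

end
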